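(* Let $\gamma \in [0,1)$. Let $P$ be a valid p-value for a null hypothesis $H_0$, i.e. $P \in [0,1]$ and $\Pr(P \le s) \le s$ for all $s \in [0,1]$ under $H_0$, and let $Q$ be an arbitrary $[0,1]$-valued random variable, with any dependence structure between $P$ and $Q$. Let $T \in \{0,1\}$ be a random variable such that, conditionally on $(Q,P)$, $T \sim \mathrm{Bern}(1-\gamma Q)$ (i.e. $T$ is drawn based on $Q$ using additional independent randomness). Define the active p-value $$\tilde P := (1-T)\,Q + T\,(1-\gamma)^{-1} P.$$ Then $\tilde P$ is a valid p-value: under $H_0$, $\Pr(\tilde P \le s) \le s$ for all $s \in [0,1]$.
   Context: $Q$ is a "proxy" p-value on which no distributional assumption is made (it need not be superuniform under $H_0$). *)

theory Defs
  imports "HOL-Probability.Probability"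
begin

end

theory Submission
  imports Defs
begin

text \<open>
  If \<open>P\<^sup>~ \<le> s\<close>, then either \<open>T = 0\<close> and \<open>Q \<le> s\<close>, or \<open>T = 1\<close> and \<open>P \<le> (1 - \<gamma>) s\<close>.
  Conditionally on \<open>(Q, P)\<close> the coin gives \<open>T = 0\<close> with probability \<open>\<gamma> Q \<le> \<gamma> s\<close>, so the first
  case has probability at most \<open>\<gamma> s\<close> whatever the dependence between \<open>P\<close> and \<open>Q\<close>; the second
  has probability at most \<open>Pr(P \<le> (1 - \<gamma>) s) \<le> (1 - \<gamma>) s\<close>
  by validity of \<open>P\<close>. The two bounds add up to \<open>s\<close>.
\<close>

lemma selection_on_preimage:
  assumes "\<forall>B\<in>sets N. measure M {x\<in>space M. T x = 1 \<and> X x \<in> B} = (\<integral>x. indicator B (X x) * w x \<partial>M)"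
    and "B \<in> sets N" "A = {x\<in>space M. X x \<in> B}"
  shows "measure M {x\<in>space M. T x = 1 \<and> x \<in> A} = (\<integral>x. indicator A x * w x \<partial>M)"
proof -
  have "(\<integral>x. indicator B (X x) * w x \<partial>M) = (\<integral>x. indicator A x * w x \<partial>M)"
    using assms(3) by (intro Bochner_Integration.integral_cong) (auto simp: indicator_def)
  moreover have "{x\<in>space M. T x = 1 \<and> x \<in> A} = {x\<in>space M. T x = 1 \<and> X x \<in> B}"
    using assms(3) by auto
  ultimately show ?thesis
    using assms(1,2) by simp
qed

lemma (in finite_measure) integral_indicator_mult_le_measure:
  fixes f :: "'a \<Rightarrow> real"
  assumes [measurable]: "A \<in> sets M" "f \<in> borel_measurable M"
    and bound: "\<And>x. x \<in> A \<Longrightarrow> \<bar>f x\<bar> \<le> c"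
  shows "(\<integral>x. indicator A x * f x \<partial>M) \<le> c * measure M A"
proof -
  have "integrable M (\<lambda>x. indicator A x * f x)"
    by (rule integrable_const_bound[where B = "\<bar>c\<bar>"]) (use bound in \<open>force simp: indicator_def\<close>)+
  moreover have "integrable M (\<lambda>x. indicator A x * c)"
    by (simp add: less_top[symmetric])
  ultimately have "(\<integral>x. indicator A x * f x \<partial>M) \<le> (\<integral>x. indicator A x * c \<partial>M)"
    by (rule integral_mono) (auto simp: indicator_def dest: bound)
  also have "\<dots> = c * measure M A"
    by (simp add: integral_mult_left_zero)
  finally show ?thesis .
qed

lemma (in finite_measure) measure_unselected_eq:
  fixes T w :: "'a \<Rightarrow> real"
  assumes [measurable]: "A \<in> sets M" "T \<in> borel_measurable M" "w \<in> borel_measurable M"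
    and T01: "\<forall>x\<in>space M. T x = 0 \<or> T x = 1"
    and w01: "\<forall>x\<in>space M. 0 \<le> w x \<and> w x \<le> 1"
    and selected: "measure M {x\<in>space M. T x = 1 \<and> x \<in> A} = (\<integral>x. indicator A x * w x \<partial>M)"
  shows "measure M {x\<in>space M. T x = 0 \<and> x \<in> A} = (\<integral>x. indicator A x * (1 - w x) \<partial>M)"
proof -
  have "{x\<in>space M. T x = 0 \<and> x \<in> A} \<union> {x\<in>space M. T x = 1 \<and> x \<in> A} = A"
    using T01 sets.sets_into_space[OF assms(1)] by auto
  moreover have "measure M ({x\<in>space M. T x = 0 \<and> x \<in> A} \<union> {x\<in>space M. T x = 1 \<and> x \<in> A})
      = measure M {x\<in>space M. T x = 0 \<and> x \<in> A} + measure M {x\<in>space M. T x = 1 \<and> x \<in> A}"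
    by (rule finite_measure_Union) auto
  ultimately have partition: "measure M A
      = measure M {x\<in>space M. T x = 0 \<and> x \<in> A} + measure M {x\<in>space M. T x = 1 \<and> x \<in> A}"
    by simp
  have "integrable M (\<lambda>x. indicator A x * w x)"
    by (rule integrable_const_bound[where B = 1]) (use w01 in \<open>auto simp: indicator_def\<close>)
  moreover have "integrable M (indicator A :: 'a \<Rightarrow> real)"
    by (simp add: less_top[symmetric])
  ultimately have "(\<integral>x. indicator A x * (1 - w x) \<partial>M) = measure M A - (\<integral>x. indicator A x * w x \<partial>M)"
    by (simp add: right_diff_distrib)
  then show ?thesis
    using partition selected by simp
qed

lemma (in prob_space) prob_unselected_le:
  fixes T w :: "'a \<Rightarrow> real"
  assumes [measurable]: "A \<in> sets M" "T \<in> borel_measurable M" "w \<in> borel_measurable M"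
    and T01: "\<forall>x\<in>space M. T x = 0 \<or> T x = 1"
    and w01: "\<forall>x\<in>space M. 0 \<le> w x \<and> w x \<le> 1"
    and selected: "measure M {x\<in>space M. T x = 1 \<and> x \<in> A} = (\<integral>x. indicator A x * w x \<partial>M)"
    and "0 \<le> c" and small: "\<And>x. x \<in> A \<Longrightarrow> 1 - w x \<le> c"
  shows "measure M {x\<in>space M. T x = 0 \<and> x \<in> A} \<le> c"
proof -
  have "measure M {x\<in>space M. T x = 0 \<and> x \<in> A} = (\<integral>x. indicator A x * (1 - w x) \<partial>M)"
    by (rule measure_unselected_eq[OF assms(1-3) T01 w01 selected])
  also have "\<dots> \<le> c * measure M A"
    using w01 small sets.sets_into_space[OF assms(1)] by (intro integral_indicator_mult_le_measure) auto
  also have "\<dots> \<le> c"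
    using \<open>0 \<le> c\<close> by (simp add: mult_left_le)
  finally show ?thesis .
qed

lemma active_pvalue_le_cases:
  fixes t p q s \<gamma> :: real
  assumes "(1 - t) * q + t * (p / (1 - \<gamma>)) \<le> s" "t = 0 \<or> t = 1" "\<gamma> < 1"
  shows "t = 0 \<and> q \<le> s \<or> t = 1 \<and> p \<le> (1 - \<gamma>) * s"
  using assms by (auto simp: divide_le_eq mult.commute)

lemma (in finite_measure) measure_active_pvalue_le:
  fixes P Q T :: "'a \<Rightarrow> real"
  assumes [measurable]: "P \<in> borel_measurable M" "Q \<in> borel_measurable M" "T \<in> borel_measurable M"
    and "\<forall>x\<in>space M. T x = 0 \<or> T x = 1" "\<gamma> < 1"
  shows "measure M {x\<in>space M. (1 - T x) * Q x + T x * (P x / (1 - \<gamma>)) \<le> s}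
    \<le> measure M {x\<in>space M. T x = 0 \<and> Q x \<le> s} + measure M {x\<in>space M. T x = 1 \<and> P x \<le> (1 - \<gamma>) * s}"
proof -
  have "{x\<in>space M. (1 - T x) * Q x + T x * (P x / (1 - \<gamma>)) \<le> s}
      \<subseteq> {x\<in>space M. T x = 0 \<and> Q x \<le> s} \<union> {x\<in>space M. T x = 1 \<and> P x \<le> (1 - \<gamma>) * s}"
    using assms(4,5) by (auto simp del: times_divide_eq_right dest!: active_pvalue_le_cases)
  then have "measure M {x\<in>space M. (1 - T x) * Q x + T x * (P x / (1 - \<gamma>)) \<le> s}
      \<le> measure M ({x\<in>space M. T x = 0 \<and> Q x \<le> s} \<union> {x\<in>space M. T x = 1 \<and> P x \<le> (1 - \<gamma>) * s})"
    by (intro finite_measure_mono) auto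
  also have "\<dots> \<le> measure M {x\<in>space M. T x = 0 \<and> Q x \<le> s} + measure M {x\<in>space M. T x = 1 \<and> P x \<le> (1 - \<gamma>) * s}"
    by (intro measure_Un_le) auto
  finally show ?thesis .
qed

theorem proposition2:
  fixes M :: "'a measure" and P Q T :: "'a \<Rightarrow> real" and \<gamma> :: real
  assumes "prob_space M"
    and "0 \<le> \<gamma>" and "\<gamma> < 1"
    and "P \<in> borel_measurable M" and "\<forall>x\<in>space M. 0 \<le> P x \<and> P x \<le> 1"
    and "\<forall>s\<in>{0..1}. measure M {x\<in>space M. P x \<le> s} \<le> s"
    and "Q \<in> borel_measurable M" and "\<forall>x\<in>space M. 0 \<le> Q x \<and> Q x \<le> 1"
    and "T \<in> borel_measurable M" and "\<forall>x\<in>space M. T x = 0 \<or> T x = 1"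
    and "\<forall>B\<in>sets (borel :: (real \<times> real) measure).
           measure M {x\<in>space M. T x = 1 \<and> (Q x, P x) \<in> B}
             = (\<integral>x. indicator B (Q x, P x) * (1 - \<gamma> * Q x) \<partial>M)"
  shows "\<forall>s\<in>{0..1}.
           measure M {x\<in>space M. (1 - T x) * Q x + T x * (P x / (1 - \<gamma>)) \<le> s} \<le> s"
proof
  fix s :: real
  assume s: "s \<in> {0..1}"
  interpret prob_space M by fact
  note [measurable] = assms(4,7,9)
  have half_plane: "{z::real \<times> real. fst z \<le> s} \<in> sets borel"
    by (intro borel_closed closed_Collect_le continuous_intros)
  have weight: "\<forall>x\<in>space M. 0 \<le> 1 - \<gamma> * Q x \<and> 1 - \<gamma> * Q x \<le> 1"
    using assms(2,3,8) by (auto intro: mult_le_one)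
  have "measure M {x\<in>space M. T x = 0 \<and> x \<in> {y\<in>space M. Q y \<le> s}} \<le> \<gamma> * s"
    using assms(2,10) weight selection_on_preimage[OF assms(11) half_plane] s
    by (intro prob_unselected_le) (auto intro: mult_left_mono)
  moreover have "measure M {x\<in>space M. T x = 1 \<and> P x \<le> (1 - \<gamma>) * s}
      \<le> measure M {x\<in>space M. P x \<le> (1 - \<gamma>) * s}"
    by (rule finite_measure_mono) auto
  moreover have "measure M {x\<in>space M. P x \<le> (1 - \<gamma>) * s} \<le> (1 - \<gamma>) * s"
    using assms(2,3,6) s by (simp add: mult_le_one)
  ultimately show "measure M {x\<in>space M. (1 - T x) * Q x + T x * (P x / (1 - \<gamma>)) \<le> s} \<le> s"
    using measure_active_pvalue_le[OF assms(4,7,9,10,3), of s] by (simp cong: conj_cong add: algebra_simps)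
qed

end
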